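(* Let $N\ge 2$ be an integer and $\tau>0$. For $t\in\{0,\tau,2\tau,\dots\}$ let $u_j^t=u(j,t)$, $j=0,\dots,N$, be defined by prescribed initial values $u(j,0)$ with $0\le u(j,0)\le 1$ for $j=0,\dots,N$, the Dirichlet boundary condition $u_0^t=u_N^t=0$ for all $t$, and the iteration, for $j=1,\dots,N-1$, $$u_j^{t+\tau}=u_j^t+\frac{u_j^tu_{j-1}^t}{2}\bigl(u_j^t+u_{j-1}^t-1\bigr)\bigl(u_{j-1}^t-u_j^t\bigr)+\frac{u_j^tu_{j+1}^t}{2}\bigl(u_j^t+u_{j+1}^t-1\bigr)\bigl(u_{j+1}^t-u_j^t\bigr).$$ Then the total density is conserved: for every $t\in\{0,\tau,2\tau,\dots\}$, $$\sum_{j=1}^{N-1}u(j,t+\tau)=\sum_{j=1}^{N-1}u(j,t).$$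
   Context: This is an aggregation–diffusion lattice model for a cell density on the grid points $x_j=j/N$; $\tau$ is the time step. *)

theory Defs
  imports Complex_Main
begin

end

theory Submission
  imports Defs
begin

text \<open>The update is in conservation form: the change at site j is the flux from site j+1 into j
minus the flux from j into j-1, where the flux across a bond with end values a, b is
a b (a + b - 1) (b - a) / 2 and is antisymmetric in (a, b). Summing over the interior sites the
fluxes telescope, and the Dirichlet condition makes both boundary fluxes vanish.\<close>

definition bond_flux :: "real \<Rightarrow> real \<Rightarrow> real" where
  "bond_flux a b = a * b / 2 * (a + b - 1) * (b - a)"

lemma bond_flux_swap: "bond_flux b a = - bond_flux a b"
  unfolding bond_flux_def by (simp add: field_simps)

lemma bond_flux_zero_left [simp]: "bond_flux 0 b = 0"
  and bond_flux_zero_right [simp]: "bond_flux a 0 = 0"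
  unfolding bond_flux_def by simp_all

lemma sum_conservation_form:
  fixes v w F :: "nat \<Rightarrow> real"
  assumes update: "\<And>j. 1 \<le> j \<Longrightarrow> j \<le> m \<Longrightarrow> v j = w j + (F j - F (j - 1))"
    and "F 0 = 0" and "F m = 0"
  shows "(\<Sum>j = 1..m. v j) = (\<Sum>j = 1..m. w j)"
proof -
  have telescope: "(\<Sum>j = 1..n. F j - F (j - 1)) = F n - F 0" for n
    by (induction n) auto
  have "(\<Sum>j = 1..m. v j) = (\<Sum>j = 1..m. w j) + (\<Sum>j = 1..m. F j - F (j - 1))"
    using update by (simp add: sum.distrib)
  with telescope[of m] assms(2,3) show ?thesis by simp
qed

theorem theorem3p2:
  fixes N :: nat and \<tau> :: real and u :: "nat \<Rightarrow> real \<Rightarrow> real"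
  assumes "N \<ge> 2" and "\<tau> > 0"
    and init: "\<And>j. j \<le> N \<Longrightarrow> 0 \<le> u j 0 \<and> u j 0 \<le> 1"
    and bc0: "\<And>k::nat. u 0 (real k * \<tau>) = 0"
    and bcN: "\<And>k::nat. u N (real k * \<tau>) = 0"
    and step: "\<And>(k::nat) j. 1 \<le> j \<Longrightarrow> j \<le> N - 1 \<Longrightarrow>
      (let t = real k * \<tau> in
        u j (t + \<tau>) = u j t
          + u j t * u (j - 1) t / 2 * (u j t + u (j - 1) t - 1) * (u (j - 1) t - u j t)
          + u j t * u (j + 1) t / 2 * (u j t + u (j + 1) t - 1) * (u (j + 1) t - u j t))"
  shows "\<forall>k::nat. (\<Sum>j = 1..N - 1. u j (real k * \<tau> + \<tau>)) = (\<Sum>j = 1..N - 1. u j (real k * \<tau>))"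
proof
  fix k :: nat
  define t where "t = real k * \<tau>"
  define F where "F j = bond_flux (u j t) (u (j + 1) t)" for j
  have "u j (t + \<tau>) = u j t + (F j - F (j - 1))" if "1 \<le> j" "j \<le> N - 1" for j
  proof -
    have "j - 1 + 1 = j" using that(1) by simp
    then have "F (j - 1) = - bond_flux (u j t) (u (j - 1) t)"
      unfolding F_def by (metis bond_flux_swap)
    moreover have "u j (t + \<tau>) = u j t + bond_flux (u j t) (u (j - 1) t) + F j"
      using step[OF that, of k] by (simp add: F_def t_def Let_def bond_flux_def)
    ultimately show ?thesis by simp
  qed
  moreover have "F 0 = 0" using bc0[of k] by (simp add: F_def t_def)
  moreover have "F (N - 1) = 0" using bcN[of k] \<open>N \<ge> 2\<close> by (simp add: F_def t_def)
  ultimately show "(\<Sum>j = 1..N - 1. u j (real k * \<tau> + \<tau>)) = (\<Sum>j = 1..N - 1. u j (real k * \<tau>))"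
    unfolding t_def by (rule sum_conservation_form)
qed

end
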